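(* Let $(\Omega,\mathcal A)$ be a measurable space and let $K\subset\mathbb C^n$ be a compact set. Then $R_\Omega^{unif}(K)=R_\Omega(K)$.
   Context: A random function $f:\Omega\times X\to\mathbb C$ (with $X$ any set) is a function such that $f(\cdot,x)$ is measurable (with respect to $\mathcal A$ and the Borel sets of $\mathbb C$) for every $x\in X$. A random rational function with no poles on $K$ is a function $r(\omega,z)$ such that for each $\omega$, $r(\omega,\cdot)$ is a rational function on $\mathbb C^n$ with no poles on $K$, and $r(\cdot,z)$ is measurable for each $z$. Consider random functions $f:\Omega\times K\to\mathbb C$ such that $f(\omega,\cdot)$ is continuous on $K$ and holomorphic on the interior of $K$ for every $\omega$. Such an $f$ belongs to $R_\Omega(K)$ if there is a sequence $r_j$ of random rational functions with no poles on $K$ such that for every $\omega\in\Omega$, $r_j(\omega,\cdot)\to f(\omega,\cdot)$ uniformly on $K$. Such an $f$ belongs to $R_\Omega^{unif}(K)$ if for every $\varepsilon>0$ there is a random rational function $r$ with no poles on $K$ such that $|r(\omega,z)-f(\omega,z)|<\varepsilon$ for all $(\omega,z)\in\Omega\times K$. *)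

theory Defs
  imports "HOL-Analysis.Analysis" "HOL-Probability.Probability"
begin

definition poly_fun :: "(complex^'n \<Rightarrow> complex) \<Rightarrow> bool" where
  "poly_fun p \<longleftrightarrow> (\<exists>(A :: ('n \<Rightarrow> nat) set) c. finite A \<and>
      (\<forall>z. p z = (\<Sum>\<alpha>\<in>A. c \<alpha> * (\<Prod>i\<in>UNIV. (z $ i) ^ (\<alpha> i)))))"

definition rat_no_poles :: "(complex^'n) set \<Rightarrow> (complex^'n \<Rightarrow> complex) \<Rightarrow> bool" where
  "rat_no_poles K r \<longleftrightarrow> (\<exists>p q. poly_fun p \<and> poly_fun q \<and> (\<forall>z\<in>K. q z \<noteq> 0) \<and>
      (\<forall>z. q z \<noteq> 0 \<longrightarrow> r z = p z / q z))"

definition random_rat :: "'a measure \<Rightarrow> (complex^'n) set \<Rightarrow> ('a \<Rightarrow> complex^'n \<Rightarrow> complex) \<Rightarrow> bool" where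
  "random_rat M K r \<longleftrightarrow> (\<forall>\<omega>\<in>space M. rat_no_poles K (r \<omega>)) \<and>
      (\<forall>z. (\<lambda>\<omega>. r \<omega> z) \<in> borel_measurable M)"

definition holo_on :: "(complex^'n) set \<Rightarrow> (complex^'n \<Rightarrow> complex) \<Rightarrow> bool" where
  "holo_on U g \<longleftrightarrow> (\<forall>z\<in>U. \<exists>L. (g has_derivative L) (at z) \<and>
      (\<forall>c w. L (c *s w) = c * L w))"

definition random_cont_holo :: "'a measure \<Rightarrow> (complex^'n) set \<Rightarrow> ('a \<Rightarrow> complex^'n \<Rightarrow> complex) \<Rightarrow> bool" where
  "random_cont_holo M K f \<longleftrightarrow> (\<forall>z\<in>K. (\<lambda>\<omega>. f \<omega> z) \<in> borel_measurable M) \<and>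
      (\<forall>\<omega>\<in>space M. continuous_on K (f \<omega>) \<and> holo_on (interior K) (f \<omega>))"

definition R_Omega :: "'a measure \<Rightarrow> (complex^'n) set \<Rightarrow> ('a \<Rightarrow> complex^'n \<Rightarrow> complex) set" where
  "R_Omega M K = {f. random_cont_holo M K f \<and>
      (\<exists>r :: nat \<Rightarrow> 'a \<Rightarrow> complex^'n \<Rightarrow> complex. (\<forall>j. random_rat M K (r j)) \<and>
         (\<forall>\<omega>\<in>space M. uniform_limit K (\<lambda>j. r j \<omega>) (f \<omega>) sequentially))}"

definition R_Omega_unif :: "'a measure \<Rightarrow> (complex^'n) set \<Rightarrow> ('a \<Rightarrow> complex^'n \<Rightarrow> complex) set" where
  "R_Omega_unif M K = {f. random_cont_holo M K f \<and>
      (\<forall>\<epsilon>>0. \<exists>r. random_rat M K r \<and>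
         (\<forall>\<omega>\<in>space M. \<forall>z\<in>K. norm (r \<omega> z - f \<omega> z) < \<epsilon>))}"

end

theory Submission
  imports Defs
begin

text \<open>Uniform convergence on K is witnessed by the values on a countable dense subset D of K,
  so the first index at which r j is within e of f is a measurable function of \<omega>; plugging this
  random index into the approximating sequence gives a single random rational function that
  is e-close to f simultaneously for all \<omega>.\<close>

lemma poly_fun_continuous_on:
  fixes p :: "complex^'n \<Rightarrow> complex"
  assumes "poly_fun p"
  shows "continuous_on S p"
proof -
  obtain A c where "\<And>z. p z = (\<Sum>\<alpha>\<in>(A :: ('n \<Rightarrow> nat) set). c \<alpha> * (\<Prod>i\<in>UNIV. (z $ i) ^ (\<alpha> i)))"
    using assms unfolding poly_fun_def by blast
  then have "p = (\<lambda>z. \<Sum>\<alpha>\<in>A. c \<alpha> * (\<Prod>i\<in>UNIV. (z $ i) ^ (\<alpha> i)))"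
    by auto
  then show ?thesis
    by (simp add: continuous_on_sum continuous_on_mult continuous_on_prod continuous_on_power
        continuous_on_component)
qed

lemma rat_no_poles_continuous_on:
  assumes "rat_no_poles K r"
  shows "continuous_on K r"
proof -
  obtain p q where pq: "poly_fun p" "poly_fun q" "\<forall>z\<in>K. q z \<noteq> 0"
    and r: "\<forall>z. q z \<noteq> 0 \<longrightarrow> r z = p z / q z"
    using assms unfolding rat_no_poles_def by blast
  have "continuous_on K (\<lambda>z. p z / q z)"
    using pq by (intro continuous_on_divide poly_fun_continuous_on) auto
  then show ?thesis
    by (rule continuous_on_eq) (use pq(3) r in simp)
qed

lemma random_rat_compose_index:
  fixes N :: "'a \<Rightarrow> nat"
  assumes "\<And>j. random_rat M K (r j)" and "N \<in> measurable M (count_space UNIV)"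
  shows "random_rat M K (\<lambda>\<omega>. r (N \<omega>) \<omega>)"
  using assms unfolding random_rat_def by (auto intro: measurable_compose_countable)

lemma uniform_limit_of_dist_less_inverse_Suc:
  assumes "\<And>j x. x \<in> K \<Longrightarrow> dist (g j x) (h x) < 1 / Suc j"
  shows "uniform_limit K g h sequentially"
proof (rule uniform_limitI)
  fix e :: real
  assume "e > 0"
  then obtain N :: nat where N: "1 / Suc N < e"
    using nat_approx_posE by blast
  have "dist (g j x) (h x) < e" if "N \<le> j" "x \<in> K" for j x
  proof -
    have "1 / Suc j \<le> 1 / Suc N"
      using that(1) by (simp add: frac_le)
    then show ?thesis
      using assms[OF that(2), of j] N by linarith
  qed
  then show "\<forall>\<^sub>F j in sequentially. \<forall>x\<in>K. dist (g j x) (h x) < e"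
    unfolding eventually_sequentially by blast
qed

lemma measurable_index_uniform_approx:
  fixes r :: "nat \<Rightarrow> 'a \<Rightarrow> 'x::metric_space \<Rightarrow> 'b::{real_normed_vector, second_countable_topology}"
  assumes D: "countable D" "closure D = K"
    and r_meas: "\<And>j z. (\<lambda>\<omega>. r j \<omega> z) \<in> borel_measurable M"
    and f_meas: "\<And>z. z \<in> K \<Longrightarrow> (\<lambda>\<omega>. f \<omega> z) \<in> borel_measurable M"
    and cont: "\<And>j \<omega>. \<omega> \<in> space M \<Longrightarrow> continuous_on K (\<lambda>z. r j \<omega> z - f \<omega> z)"
    and lim: "\<And>\<omega>. \<omega> \<in> space M \<Longrightarrow> uniform_limit K (\<lambda>j. r j \<omega>) (f \<omega>) sequentially"
    and "e > 0"
  obtains N where "N \<in> measurable M (count_space UNIV)"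
    and "\<And>\<omega> z. \<omega> \<in> space M \<Longrightarrow> z \<in> K \<Longrightarrow> norm (r (N \<omega>) \<omega> z - f \<omega> z) < e"
proof
  define good where "good j \<omega> \<longleftrightarrow> (\<forall>z\<in>D. norm (r j \<omega> z - f \<omega> z) \<le> e / 2)" for j \<omega>
  have "D \<subseteq> K"
    using D(2) closure_subset by blast
  have "{\<omega>\<in>space M. good j \<omega>} \<in> sets M" for j
    unfolding good_def
  proof (rule sets.sets_Collect_countable_All'[OF _ D(1)])
    fix z
    assume "z \<in> D"
    with \<open>D \<subseteq> K\<close> have [measurable]: "(\<lambda>\<omega>. f \<omega> z) \<in> borel_measurable M"
      using f_meas by blast
    have [measurable]: "(\<lambda>\<omega>. r j \<omega> z) \<in> borel_measurable M"
      by (rule r_meas)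
    show "{\<omega> \<in> space M. norm (r j \<omega> z - f \<omega> z) \<le> e / 2} \<in> sets M"
      by measurable
  qed
  then show "(\<lambda>\<omega>. LEAST j. good j \<omega>) \<in> measurable M (count_space UNIV)"
    by (intro measurable_Least) (simp add: pred_def)
  fix \<omega> z
  assume \<omega>: "\<omega> \<in> space M" and "z \<in> K"
  obtain j where "\<forall>x\<in>K. dist (r j \<omega> x) (f \<omega> x) < e / 2"
    using lim[OF \<omega>] \<open>e > 0\<close> unfolding uniform_limit_iff eventually_sequentially
    by (meson half_gt_zero order_refl)
  then have "good j \<omega>"
    using \<open>D \<subseteq> K\<close> unfolding good_def by (auto simp: dist_norm less_imp_le)
  then have "good (LEAST j. good j \<omega>) \<omega>"
    by (rule LeastI)
  then have "norm (r (LEAST j. good j \<omega>) \<omega> z - f \<omega> z) \<le> e / 2"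
    using continuous_on_closure_norm_le[of D "\<lambda>z. r (LEAST j. good j \<omega>) \<omega> z - f \<omega> z"]
      cont[OF \<omega>] D(2) \<open>z \<in> K\<close> unfolding good_def by blast
  then show "norm (r (LEAST j. good j \<omega>) \<omega> z - f \<omega> z) < e"
    using \<open>e > 0\<close> by linarith
qed

lemma R_Omega_unif_subset_R_Omega: "R_Omega_unif M K \<subseteq> R_Omega M K"
proof
  fix f
  assume f: "f \<in> R_Omega_unif M K"
  then have "\<forall>j::nat. \<exists>r. random_rat M K r \<and>
      (\<forall>\<omega>\<in>space M. \<forall>z\<in>K. norm (r \<omega> z - f \<omega> z) < 1 / Suc j)"
    unfolding R_Omega_unif_def by simp
  then obtain r where r: "\<And>j. random_rat M K (r j)"
    and close: "\<And>j \<omega> z. \<omega> \<in> space M \<Longrightarrow> z \<in> K \<Longrightarrow> norm (r j \<omega> z - f \<omega> z) < 1 / Suc j"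
    by metis
  have "uniform_limit K (\<lambda>j. r j \<omega>) (f \<omega>) sequentially" if "\<omega> \<in> space M" for \<omega>
    using close[OF that] by (intro uniform_limit_of_dist_less_inverse_Suc) (simp add: dist_norm)
  with f r show "f \<in> R_Omega M K"
    unfolding R_Omega_unif_def R_Omega_def by blast
qed

lemma R_Omega_subset_R_Omega_unif:
  assumes "closed K"
  shows "R_Omega M K \<subseteq> R_Omega_unif M K"
proof
  fix f
  assume "f \<in> R_Omega M K"
  then obtain r where f: "random_cont_holo M K f" and r: "\<And>j. random_rat M K (r j)"
    and lim: "\<And>\<omega>. \<omega> \<in> space M \<Longrightarrow> uniform_limit K (\<lambda>j. r j \<omega>) (f \<omega>) sequentially"
    unfolding R_Omega_def by blast
  obtain D where "countable D" "D \<subseteq> K" "K \<subseteq> closure D"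
    using separable by blast
  then have D: "countable D" "closure D = K"
    using closure_minimal[OF _ assms, of D] by auto
  have cont: "continuous_on K (\<lambda>z. r j \<omega> z - f \<omega> z)" if "\<omega> \<in> space M" for j \<omega>
    using r[of j] f that unfolding random_rat_def random_cont_holo_def
    by (intro continuous_on_diff[OF rat_no_poles_continuous_on]) auto
  have r_meas: "\<And>j z. (\<lambda>\<omega>. r j \<omega> z) \<in> borel_measurable M"
    using r unfolding random_rat_def by blast
  have f_meas: "\<And>z. z \<in> K \<Longrightarrow> (\<lambda>\<omega>. f \<omega> z) \<in> borel_measurable M"
    using f unfolding random_cont_holo_def by blast
  have "\<exists>R. random_rat M K R \<and> (\<forall>\<omega>\<in>space M. \<forall>z\<in>K. norm (R \<omega> z - f \<omega> z) < e)"
    if "e > 0" for e :: real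
  proof -
    obtain N where "N \<in> measurable M (count_space UNIV)"
      and "\<And>\<omega> z. \<omega> \<in> space M \<Longrightarrow> z \<in> K \<Longrightarrow> norm (r (N \<omega>) \<omega> z - f \<omega> z) < e"
      using measurable_index_uniform_approx[OF D r_meas f_meas cont lim \<open>e > 0\<close>] by blast
    with r show ?thesis
      by (blast intro: random_rat_compose_index)
  qed
  with f show "f \<in> R_Omega_unif M K"
    unfolding R_Omega_unif_def by blast
qed

theorem theorem3p1:
  fixes M :: "'a measure" and K :: "(complex^'n) set"
  assumes "compact K"
  shows "R_Omega_unif M K = R_Omega M K"
  using R_Omega_unif_subset_R_Omega R_Omega_subset_R_Omega_unif[OF compact_imp_closed[OF assms]]
  by (rule subset_antisym)

end
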